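(* Let $G$ be a graph and let $C_1,C_2$ be two different simple cycles in $G$ that are not edge-disjoint (i.e. $E(C_1)\cap E(C_2)\neq\emptyset$). If $G$ does not contain any removable cycle of length at most $|C_1|+|C_2|$, then $G[V(C_1)\cup V(C_2)]$ is isomorphic to a complete graph.
   Context: A simple cycle in a graph $G$ is a sequence $(v_1,\dots,v_k)$ of $k>2$ distinct vertices with $\{v_i,v_{i+1}\}\in E(G)$ for $1\le i<k$ and $\{v_k,v_1\}\in E(G)$; $V(C)$ and $E(C)$ are its vertex and edge sets, and its length $|C|$ is $|V(C)|$. Two cycles are different if they are not the same cycle (their edge sets differ). $G[U]$ is the induced subgraph on $U$. A simple cycle $C$ in $G$ is removable if $G[V(C)]$ is neither isomorphic to a complete graph nor to a cycle graph of odd length. *)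

theory Defs
  imports Main
begin

definition graph :: "'a set \<Rightarrow> 'a set set \<Rightarrow> bool" where
  "graph V E \<longleftrightarrow> (\<forall>e\<in>E. \<exists>u v. e = {u, v} \<and> u \<noteq> v \<and> u \<in> V \<and> v \<in> V)"

definition induced_edges :: "'a set set \<Rightarrow> 'a set \<Rightarrow> 'a set set" where
  "induced_edges E U = {e \<in> E. e \<subseteq> U}"

definition graph_iso :: "'a set \<Rightarrow> 'a set set \<Rightarrow> 'b set \<Rightarrow> 'b set set \<Rightarrow> bool" where
  "graph_iso V1 E1 V2 E2 \<longleftrightarrow>
     (\<exists>f. bij_betw f V1 V2 \<and> (\<forall>u\<in>V1. \<forall>v\<in>V1. ({u, v} \<in> E1 \<longleftrightarrow> {f u, f v} \<in> E2)))"

definition complete_edges :: "nat \<Rightarrow> nat set set" where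
  "complete_edges n = {{i, j} | i j. i < n \<and> j < n \<and> i \<noteq> j}"

definition cycle_graph_edges :: "nat \<Rightarrow> nat set set" where
  "cycle_graph_edges n = {{i, (i + 1) mod n} | i. i < n}"

definition is_complete_graph :: "'a set \<Rightarrow> 'a set set \<Rightarrow> bool" where
  "is_complete_graph V E \<longleftrightarrow> (\<exists>n. graph_iso V E {0..<n} (complete_edges n))"

definition is_odd_cycle_graph :: "'a set \<Rightarrow> 'a set set \<Rightarrow> bool" where
  "is_odd_cycle_graph V E \<longleftrightarrow>
     (\<exists>n. n \<ge> 3 \<and> odd n \<and> graph_iso V E {0..<n} (cycle_graph_edges n))"

definition simple_cycle :: "'a set \<Rightarrow> 'a set set \<Rightarrow> 'a list \<Rightarrow> bool" where
  "simple_cycle V E c \<longleftrightarrow>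
     length c > 2 \<and> distinct c \<and> set c \<subseteq> V \<and>
     (\<forall>i < length c. {c ! i, c ! ((i + 1) mod length c)} \<in> E)"

definition cycle_verts :: "'a list \<Rightarrow> 'a set" where
  "cycle_verts c = set c"

definition cycle_edges :: "'a list \<Rightarrow> 'a set set" where
  "cycle_edges c = {{c ! i, c ! ((i + 1) mod length c)} | i. i < length c}"

definition removable :: "'a set \<Rightarrow> 'a set set \<Rightarrow> 'a list \<Rightarrow> bool" where
  "removable V E c \<longleftrightarrow> simple_cycle V E c \<and>
     \<not> is_complete_graph (cycle_verts c) (induced_edges E (cycle_verts c)) \<and>
     \<not> is_odd_cycle_graph (cycle_verts c) (induced_edges E (cycle_verts c))"

end

theory Submission
  imports Defs
begin

(* Rotating and reversing, both cycles become paths P, Q from u to v closed by a common edge uv.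
  A short simple cycle that is not removable and is not an odd cycle graph is complete; this
  applies to short even cycles and to short cycles containing a vertex with three neighbours on
  them. If P is odd, an ear R of Q over P closes two cycles with the two arcs of P, of total
  length |P| + 2|R| + 2, so one of them is even, hence complete; the resulting edge between the
  ends of its arc is a chord of P, closes P, or gives the first ear vertex three neighbours on
  the other cycle. In every case V(P) is a clique, and likewise V(Q). Finally for x in
  V(P) - V(Q) and y in V(Q) - V(P) the short even cycle x u y v is complete, so xy is an edge. *)

abbreviation walk :: "'a set set \<Rightarrow> 'a list \<Rightarrow> bool" where
  "walk E \<equiv> successively (\<lambda>x y. {x, y} \<in> E)"

lemma walk_rev [simp]: "walk E (rev xs) \<longleftrightarrow> walk E xs"
  by (simp add: insert_commute)

lemma walk_take: "walk E xs \<Longrightarrow> walk E (take n xs)"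
  by (simp add: successively_conv_nth)

lemma walk_drop: "walk E xs \<Longrightarrow> walk E (drop n xs)"
  by (simp add: successively_conv_nth)

lemma walk_Cons_append_singleton:
  "walk E (x # R @ [y]) \<longleftrightarrow>
     (if R = [] then {x, y} \<in> E else {x, hd R} \<in> E \<and> walk E R \<and> {last R, y} \<in> E)"
  by (cases R) (auto simp: successively_append_iff successively_Cons)

lemma walk_segment:
  assumes "walk E Q" "0 < i" "i + d < length Q"
  shows "walk E (Q ! (i - 1) # take d (drop i Q) @ [Q ! (i + d)])"
proof -
  have "drop (i - 1) Q = Q ! (i - 1) # drop i Q"
    using assms(2,3) by (metis Cons_nth_drop_Suc Suc_diff_1 add_lessD1 less_imp_diff_less)
  moreover have "take (Suc d) (drop i Q) = take d (drop i Q) @ [Q ! (i + d)]"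
    using assms(3) by (simp add: take_Suc_conv_app_nth)
  ultimately have "Q ! (i - 1) # take d (drop i Q) @ [Q ! (i + d)] = take (d + 2) (drop (i - 1) Q)"
    by simp
  then show ?thesis using assms(1) walk_take walk_drop by metis
qed

lemma simple_cycle_iff_walk:
  "simple_cycle V E c \<longleftrightarrow>
     2 < length c \<and> distinct c \<and> set c \<subseteq> V \<and> walk E c \<and> {last c, hd c} \<in> E"
proof (cases "2 < length c")
  case True
  let ?n = "length c"
  have "(\<forall>i < ?n. {c ! i, c ! ((i + 1) mod ?n)} \<in> E) \<longleftrightarrow>
        (\<forall>i. Suc i < ?n \<longrightarrow> {c ! i, c ! Suc i} \<in> E) \<and> {c ! (?n - 1), c ! 0} \<in> E"
    (is "?cyc \<longleftrightarrow> ?path \<and> ?closing")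
  proof
    assume cyc: ?cyc
    have ?path using cyc by (metis Suc_eq_plus1 Suc_lessD mod_less)
    moreover have "?n - 1 < ?n" "Suc (?n - 1) = ?n" using True by simp_all
    with cyc have ?closing by fastforce
    ultimately show "?path \<and> ?closing" ..
  next
    assume "?path \<and> ?closing"
    then show ?cyc
      by (metis Suc_eq_plus1 Suc_lessI diff_Suc_1 mod_less mod_self)
  qed
  moreover have "c \<noteq> []" using True by auto
  ultimately show ?thesis using True
    by (simp add: simple_cycle_def successively_conv_nth hd_conv_nth last_conv_nth)
qed (simp add: simple_cycle_def)

lemma cycle_edges_rotate_subset: "cycle_edges (rotate m c) \<subseteq> cycle_edges c"
proof
  fix e assume "e \<in> cycle_edges (rotate m c)"
  then obtain i where i: "i < length c"
    and e: "e = {rotate m c ! i, rotate m c ! ((i + 1) mod length c)}"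
    by (auto simp: cycle_edges_def)
  let ?n = "length c"
  let ?j = "(m + i) mod ?n"
  have n: "0 < ?n" using i by linarith
  have "rotate m c ! i = c ! ?j" using i by (simp add: nth_rotate)
  moreover have "rotate m c ! ((i + 1) mod ?n) = c ! ((?j + 1) mod ?n)"
    using n by (simp add: nth_rotate mod_simps)
  moreover have "?j < ?n" using n by simp
  ultimately show "e \<in> cycle_edges c"
    using e by (auto simp: cycle_edges_def)
qed

lemma cycle_edges_rotate [simp]: "cycle_edges (rotate m c) = cycle_edges c"
proof
  have "rotate (m * (length c - 1)) (rotate m c) = c"
  proof (cases "c = []")
    case False
    then have "m * (length c - 1) + m = m * length c"
      by (simp add: algebra_simps Suc_leI mult_le_mono)
    then show ?thesis by (simp add: rotate_rotate)
  qed simp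
  then show "cycle_edges c \<subseteq> cycle_edges (rotate m c)"
    by (metis cycle_edges_rotate_subset)
qed (rule cycle_edges_rotate_subset)

lemma cycle_edges_rev_subset: "cycle_edges (rev c) \<subseteq> cycle_edges c"
proof
  fix e assume "e \<in> cycle_edges (rev c)"
  then obtain i where i: "i < length c"
    and e: "e = {rev c ! i, rev c ! ((i + 1) mod length c)}"
    by (auto simp: cycle_edges_def)
  show "e \<in> cycle_edges c"
  proof (cases "Suc i < length c")
    case True
    then have "e = {c ! (length c - 2 - i), c ! ((length c - 2 - i + 1) mod length c)}"
      using e by (auto simp: rev_nth insert_commute Suc_diff_Suc numeral_2_eq_2)
    then show ?thesis using True by (auto simp: cycle_edges_def)
  next
    case False
    with i have "i = length c - 1" "Suc i = length c" "c \<noteq> []" by auto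
    with i e have "e = {c ! (length c - 1), c ! ((length c - 1 + 1) mod length c)}"
      by (auto simp: rev_nth insert_commute)
    then show ?thesis using i by (auto simp: cycle_edges_def)
  qed
qed

lemma cycle_edges_rev [simp]: "cycle_edges (rev c) = cycle_edges c"
  using cycle_edges_rev_subset[of c] cycle_edges_rev_subset[of "rev c"] by simp

lemma simple_cycle_iff_cycle_edges:
  "simple_cycle V E c \<longleftrightarrow> 2 < length c \<and> distinct c \<and> set c \<subseteq> V \<and> cycle_edges c \<subseteq> E"
  by (auto simp: simple_cycle_def cycle_edges_def)

lemma simple_cycle_rotate [simp]: "simple_cycle V E (rotate m c) \<longleftrightarrow> simple_cycle V E c"
  by (simp add: simple_cycle_iff_cycle_edges)

lemma simple_cycle_rev [simp]: "simple_cycle V E (rev c) \<longleftrightarrow> simple_cycle V E c"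
  by (simp add: simple_cycle_iff_cycle_edges)

lemma simple_cycle_hd_neq_last:
  assumes "simple_cycle V E c"
  shows "hd c \<noteq> last c"
proof -
  have "distinct c" "0 < length c" "length c - 1 < length c" "length c - 1 \<noteq> 0"
    using assms by (auto simp: simple_cycle_def)
  then show ?thesis by (auto simp: hd_conv_nth last_conv_nth nth_eq_iff_index_eq)
qed

lemma simple_cycle_through_edge:
  assumes c: "simple_cycle V E c" and uv: "{u, v} \<in> cycle_edges c"
  obtains P where "simple_cycle V E P" "set P = set c" "length P = length c"
    "cycle_edges P = cycle_edges c" "hd P = u" "last P = v"
proof -
  let ?n = "length c"
  obtain i where i: "i < ?n" "{u, v} = {c ! i, c ! ((i + 1) mod ?n)}"
    using uv by (auto simp: cycle_edges_def)
  define R where "R = rotate (Suc i) c"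
  have R: "simple_cycle V E R" "set R = set c" "length R = length c"
    "cycle_edges R = cycle_edges c"
    using c unfolding R_def by (simp_all del: rotate_Suc)
  have "c \<noteq> []" using i by auto
  then have "hd R = c ! ((i + 1) mod ?n)" unfolding R_def by (simp add: hd_rotate_conv_nth del: rotate_Suc)
  moreover have "last R = c ! i"
  proof -
    have "last R = c ! ((Suc i + (?n - 1)) mod ?n)"
      using \<open>c \<noteq> []\<close> by (simp add: R_def last_conv_nth nth_rotate del: rotate_Suc)
    also have "Suc i + (?n - 1) = i + ?n" using i by simp
    also have "(i + ?n) mod ?n = i" using i by simp
    finally show ?thesis .
  qed
  ultimately consider "u = hd R" "v = last R" | "u = last R" "v = hd R"
    using i(2) by (auto simp: doubleton_eq_iff)
  then show thesis
  proof cases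
    case 1
    then show thesis using that[of R] R by simp
  next
    case 2
    then show thesis using that[of "rev R"] R by (simp add: hd_rev last_rev)
  qed
qed

lemma simple_cycle_prefix_ear:
  assumes P: "simple_cycle V E P" and k: "0 < k" "k < length P"
    and R: "distinct R" "set R \<inter> set P = {}" "set R \<subseteq> V"
    and ear: "walk E (P ! k # R @ [hd P])" and nontrivial: "2 < Suc k + length R"
  shows "simple_cycle V E (take (Suc k) P @ R)"
  unfolding simple_cycle_iff_walk
proof (intro conjI)
  let ?A = "take (Suc k) P"
  have P': "distinct P" "walk E P" "set P \<subseteq> V" "P \<noteq> []"
    using P by (auto simp: simple_cycle_iff_walk)
  have A: "?A \<noteq> []" "hd ?A = hd P" "walk E ?A" "length ?A = Suc k"
    using k walk_take[OF P'(2)] by auto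
  have last_A: "last ?A = P ! k" using k by (simp add: take_Suc_conv_app_nth)
  show "2 < length (?A @ R)" using nontrivial A by simp
  show "distinct (?A @ R)" using P'(1) R(1,2) by (auto dest: in_set_takeD)
  show "set (?A @ R) \<subseteq> V" using P'(3) R(3) by (auto dest: in_set_takeD)
  show "walk E (?A @ R)" "{last (?A @ R), hd (?A @ R)} \<in> E"
    using ear A last_A by (auto simp: walk_Cons_append_singleton successively_append_iff
        insert_commute split: if_splits)
qed

lemma first_difference_of_paths:
  assumes P: "distinct P" "P \<noteq> []" and Q: "distinct Q" "Q \<noteq> []"
    and ends: "hd P = hd Q" "last P = last Q" and "P \<noteq> Q"
  obtains i where "0 < i" "i < length P" "i < length Q" "P ! i \<noteq> Q ! i"
    "\<And>j. j < i \<Longrightarrow> P ! j = Q ! j"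
proof -
  have "\<exists>i. i < length P \<and> i < length Q \<and> P ! i \<noteq> Q ! i"
  proof (rule ccontr)
    assume "\<not> ?thesis"
    then have common: "\<And>i. i < length P \<Longrightarrow> i < length Q \<Longrightarrow> P ! i = Q ! i" by blast
    have last_nth: "P ! (length P - 1) = Q ! (length Q - 1)"
      using ends(2) P(2) Q(2) by (simp add: last_conv_nth)
    have "0 < length P" "0 < length Q" using P(2) Q(2) by auto
    have "length P = length Q"
    proof (cases "length P \<le> length Q")
      case True
      then have "Q ! (length P - 1) = Q ! (length Q - 1)"
        using common[of "length P - 1"] last_nth \<open>0 < length P\<close> by simp
      then have "length P - 1 = length Q - 1"
        using Q(1) True \<open>0 < length P\<close> by (simp add: nth_eq_iff_index_eq)
      then show ?thesis using \<open>0 < length P\<close> \<open>0 < length Q\<close> by linarith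
    next
      case False
      then have "P ! (length Q - 1) = P ! (length P - 1)"
        using common[of "length Q - 1"] last_nth \<open>0 < length Q\<close> by simp
      then have "length Q - 1 = length P - 1"
        using P(1) False \<open>0 < length Q\<close> by (simp add: nth_eq_iff_index_eq)
      then show ?thesis using \<open>0 < length P\<close> \<open>0 < length Q\<close> by linarith
    qed
    then show False using common \<open>P \<noteq> Q\<close> by (simp add: nth_equalityI)
  qed
  then obtain i where i: "i < length P" "i < length Q" "P ! i \<noteq> Q ! i"
    and below: "\<And>j. j < i \<Longrightarrow> P ! j = Q ! j"
    unfolding exists_least_iff[of "\<lambda>i. i < length P \<and> i < length Q \<and> P ! i \<noteq> Q ! i"]
    by (metis less_trans)
  moreover have "i \<noteq> 0" using i(3) ends(1) P(2) Q(2) by (metis hd_conv_nth)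
  ultimately show thesis using that by blast
qed

lemma first_index_at_or_after:
  assumes "i \<le> j" "j < length xs" "xs ! j \<in> A"
  obtains d where "i + d < length xs" "xs ! (i + d) \<in> A" "\<And>d'. d' < d \<Longrightarrow> xs ! (i + d') \<notin> A"
proof -
  have "i + (j - i) < length xs \<and> xs ! (i + (j - i)) \<in> A" using assms by simp
  then obtain d where "i + d < length xs" "xs ! (i + d) \<in> A"
    and "\<forall>d' < d. \<not> (i + d' < length xs \<and> xs ! (i + d') \<in> A)"
    using exists_least_iff[of "\<lambda>d. i + d < length xs \<and> xs ! (i + d) \<in> A"] by blast
  then show thesis using that by auto
qed

lemma ear_of_paths:
  assumes P: "distinct P" "P \<noteq> []" and Q: "distinct Q" "walk E Q" "2 < length Q"
    and ends: "hd P = hd Q" "last P = last Q" and "P \<noteq> Q"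
  obtains a b R where "a < b" "b < length P" "distinct R" "set R \<inter> set P = {}" "set R \<subseteq> set Q"
    "walk E (P ! a # R @ [P ! b])" "R \<noteq> [] \<or> a + 2 \<le> b" "R \<noteq> [] \<or> a \<noteq> 0 \<or> b \<noteq> length P - 1"
    "length R + 2 \<le> length Q"
proof -
  have "Q \<noteq> []" using Q(3) by auto
  obtain i where i: "0 < i" "i < length P" "i < length Q" "P ! i \<noteq> Q ! i"
    and common: "\<And>j. j < i \<Longrightarrow> P ! j = Q ! j"
    using first_difference_of_paths[OF P Q(1) \<open>Q \<noteq> []\<close> ends \<open>P \<noteq> Q\<close>] by blast
  have "i \<le> length Q - 1" "length Q - 1 < length Q" using i(3) by auto
  moreover have "Q ! (length Q - 1) \<in> set P"
    using ends(2) P(2) \<open>Q \<noteq> []\<close> by (metis last_conv_nth last_in_set)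
  ultimately obtain d where d: "i + d < length Q" "Q ! (i + d) \<in> set P"
    and outside: "\<And>d'. d' < d \<Longrightarrow> Q ! (i + d') \<notin> set P"
    by (rule first_index_at_or_after) blast
  obtain b where b: "b < length P" "P ! b = Q ! (i + d)" using d(2) by (metis in_set_conv_nth)
  have "i \<le> b"
  proof (rule ccontr)
    assume "\<not> i \<le> b"
    then have "Q ! b = Q ! (i + d)" using common b(2) by simp
    then show False using Q(1) d(1) \<open>\<not> i \<le> b\<close> i(3) by (simp add: nth_eq_iff_index_eq)
  qed
  \<comment> \<open>R is the stretch of Q from its first deviation from P to its next return to P.\<close>
  define R where "R = take d (drop i Q)"
  have length_R: "length R = d" using d(1) by (simp add: R_def)
  have "set R \<inter> set P = {}"
    using outside i(3) length_R by (auto simp: R_def in_set_conv_nth)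
  moreover have "walk E (P ! (i - 1) # R @ [P ! b])"
    using walk_segment[OF Q(2) i(1) d(1)] common[of "i - 1"] i(1) b(2) by (simp add: R_def)
  moreover have "R \<noteq> [] \<or> i - 1 + 2 \<le> b"
    using \<open>i \<le> b\<close> i(1,4) b(2) length_R by (cases "b = i") auto
  moreover have "R \<noteq> [] \<or> i - 1 \<noteq> 0 \<or> b \<noteq> length P - 1"
  proof (rule ccontr)
    assume "\<not> ?thesis"
    then have "d = 0" "i = 1" "b = length P - 1" using i(1) length_R by auto
    then have "Q ! 1 = Q ! (length Q - 1)"
      using b(2) ends(2) P(2) \<open>Q \<noteq> []\<close> by (simp add: last_conv_nth)
    then show False using Q(1,3) by (simp add: nth_eq_iff_index_eq)
  qed
  moreover have "distinct R" "set R \<subseteq> set Q" "length R + 2 \<le> length Q"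
    using Q(1) d(1) i(1) length_R by (auto simp: R_def dest: in_set_takeD in_set_dropD)
  ultimately show thesis using that[of "i - 1" b R] \<open>i \<le> b\<close> i(1) b(1) by simp
qed

definition clique :: "'a set set \<Rightarrow> 'a set \<Rightarrow> bool" where
  "clique E S \<longleftrightarrow> (\<forall>x\<in>S. \<forall>y\<in>S. x \<noteq> y \<longrightarrow> {x, y} \<in> E)"

lemma cliqueD: "clique E S \<Longrightarrow> x \<in> S \<Longrightarrow> y \<in> S \<Longrightarrow> x \<noteq> y \<Longrightarrow> {x, y} \<in> E"
  unfolding clique_def by blast

lemma clique_subset: "clique E S \<Longrightarrow> T \<subseteq> S \<Longrightarrow> clique E T"
  unfolding clique_def by blast

lemma clique_if_complete_graph:
  assumes "is_complete_graph S (induced_edges E S)"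
  shows "clique E S"
proof -
  obtain n f where f: "bij_betw f S {0..<n}"
    and iso: "\<forall>u\<in>S. \<forall>v\<in>S. {u, v} \<in> induced_edges E S \<longleftrightarrow> {f u, f v} \<in> complete_edges n"
    using assms unfolding is_complete_graph_def graph_iso_def by blast
  show ?thesis unfolding clique_def
  proof (intro ballI impI)
    fix x y assume xy: "x \<in> S" "y \<in> S" "x \<noteq> y"
    then have "f x \<noteq> f y" "f x < n" "f y < n"
      using f by (auto simp: bij_betw_def inj_on_def)
    then have "{f x, f y} \<in> complete_edges n" unfolding complete_edges_def by blast
    then show "{x, y} \<in> E" using iso xy unfolding induced_edges_def by auto
  qed
qed

lemma complete_graph_if_clique:
  assumes "graph V E" "finite S" "clique E S"
  shows "is_complete_graph S (induced_edges E S)"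
proof -
  obtain f where f: "bij_betw f S {0..<card S}"
    using ex_bij_betw_finite_nat[OF assms(2)] by blast
  have "{a, b} \<in> induced_edges E S \<longleftrightarrow> {f a, f b} \<in> complete_edges (card S)"
    if "a \<in> S" "b \<in> S" for a b
  proof (cases "a = b")
    case True
    have "{a} \<notin> E" using assms(1) by (force simp: graph_def doubleton_eq_iff)
    moreover have "{f a} \<notin> complete_edges (card S)" by (force simp: complete_edges_def doubleton_eq_iff)
    ultimately show ?thesis using True by (simp add: induced_edges_def)
  next
    case False
    then have "f a \<noteq> f b" "f a < card S" "f b < card S"
      using f that by (auto simp: bij_betw_def inj_on_def)
    then show ?thesis
      using cliqueD[OF assms(3) that False] that
      by (auto simp: induced_edges_def complete_edges_def)
  qed
  with f show ?thesis unfolding is_complete_graph_def graph_iso_def by blast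
qed

lemma odd_cycle_graph_card_odd: "is_odd_cycle_graph S F \<Longrightarrow> odd (card S)"
  unfolding is_odd_cycle_graph_def graph_iso_def
  by (metis bij_betw_same_card card_atLeastLessThan diff_zero)

lemma cycle_graph_edges_neighbour:
  "{k, j} \<in> cycle_graph_edges n \<Longrightarrow> k \<noteq> j \<Longrightarrow> j = Suc k mod n \<or> k = Suc j mod n"
  unfolding cycle_graph_edges_def by (auto simp: doubleton_eq_iff)

lemma odd_cycle_graph_no_three_neighbours:
  assumes "is_odd_cycle_graph S F" "distinct [x, y1, y2, y3]" "{x, y1, y2, y3} \<subseteq> S"
    "{{x, y1}, {x, y2}, {x, y3}} \<subseteq> F"
  shows False
proof -
  obtain n f where f: "bij_betw f S {0..<n}"
    and iso: "\<forall>u\<in>S. \<forall>v\<in>S. {u, v} \<in> F \<longleftrightarrow> {f u, f v} \<in> cycle_graph_edges n"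
    using assms(1) unfolding is_odd_cycle_graph_def graph_iso_def by blast
  have inj: "inj_on f S" and range: "\<And>z. z \<in> S \<Longrightarrow> f z < n"
    using f by (auto simp: bij_betw_def)
  have distinct: "distinct [f x, f y1, f y2, f y3]"
    using assms(2,3) inj by (simp add: inj_on_eq_iff)
  have neighbour: "f y = Suc (f x) mod n \<or> f x = Suc (f y) mod n" if "y \<in> {y1, y2, y3}" for y
  proof (rule cycle_graph_edges_neighbour)
    show "{f x, f y} \<in> cycle_graph_edges n" using iso assms(3,4) that by auto
    show "f x \<noteq> f y" using distinct that by auto
  qed
  have same_predecessor: "f y = f y'"
    if "y \<in> {y1, y2, y3}" "y' \<in> {y1, y2, y3}"
      "f y \<noteq> Suc (f x) mod n" "f y' \<noteq> Suc (f x) mod n" for y y'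
  proof -
    have "Suc (f y) mod n = Suc (f y') mod n" using neighbour that by metis
    moreover have "f y < n" "f y' < n" using range assms(3) that by auto
    ultimately show ?thesis by (cases "Suc (f y) = n"; cases "Suc (f y') = n") auto
  qed
  show False
    using same_predecessor[of y1 y2] same_predecessor[of y1 y3] same_predecessor[of y2 y3] distinct
    by (cases "f y1 = Suc (f x) mod n"; cases "f y2 = Suc (f x) mod n") auto
qed

locale no_short_removable_cycle =
  fixes V :: "'a set" and E :: "'a set set" and L :: nat
  assumes not_removable: "simple_cycle V E C \<Longrightarrow> length C \<le> L \<Longrightarrow> \<not> removable V E C"
begin

lemma short_cycle_clique_if_not_odd_cycle_graph:
  assumes "simple_cycle V E c" "length c \<le> L"
    and "\<not> is_odd_cycle_graph (set c) (induced_edges E (set c))"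
  shows "clique E (set c)"
  using not_removable[OF assms(1,2)] assms clique_if_complete_graph
  by (auto simp: removable_def cycle_verts_def)

lemma short_even_cycle_clique:
  assumes "simple_cycle V E c" "length c \<le> L" "even (length c)"
  shows "clique E (set c)"
proof (rule short_cycle_clique_if_not_odd_cycle_graph[OF assms(1,2)])
  have "card (set c) = length c" using assms(1) by (simp add: simple_cycle_def distinct_card)
  then show "\<not> is_odd_cycle_graph (set c) (induced_edges E (set c))"
    using assms(3) odd_cycle_graph_card_odd by metis
qed

lemma short_cycle_clique_if_three_neighbours:
  assumes "simple_cycle V E c" "length c \<le> L"
    and "distinct [x, y1, y2, y3]" "{x, y1, y2, y3} \<subseteq> set c" "{{x, y1}, {x, y2}, {x, y3}} \<subseteq> E"
  shows "clique E (set c)"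
proof (rule short_cycle_clique_if_not_odd_cycle_graph[OF assms(1,2)])
  have "{{x, y1}, {x, y2}, {x, y3}} \<subseteq> induced_edges E (set c)"
    using assms(4,5) by (auto simp: induced_edges_def)
  then show "\<not> is_odd_cycle_graph (set c) (induced_edges E (set c))"
    using odd_cycle_graph_no_three_neighbours[OF _ assms(3,4)] by blast
qed

lemma short_cycle_with_chord_clique:
  assumes P: "simple_cycle V E P" "length P \<le> L"
    and k: "2 \<le> k" "Suc k < length P" and chord: "{hd P, P ! k} \<in> E"
  shows "clique E (set P)"
proof (rule short_cycle_clique_if_three_neighbours[OF P, of "P ! 0" "P ! 1" "P ! k" "P ! (length P - 1)"])
  have P': "distinct P" "walk E P" "{last P, hd P} \<in> E" "P \<noteq> []"
    using P(1) by (auto simp: simple_cycle_iff_walk)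
  have idx: "0 < length P" "1 < length P" "k < length P" "length P - 1 < length P"
    using k by auto
  show "distinct [P ! 0, P ! 1, P ! k, P ! (length P - 1)]"
    using P'(1) k idx by (auto simp: nth_eq_iff_index_eq)
  show "{P ! 0, P ! 1, P ! k, P ! (length P - 1)} \<subseteq> set P" using idx by simp
  show "{{P ! 0, P ! 1}, {P ! 0, P ! k}, {P ! 0, P ! (length P - 1)}} \<subseteq> E"
    using P' idx chord successively_nth[OF P'(2), of 0]
    by (simp add: hd_conv_nth last_conv_nth insert_commute)
qed

lemma short_cycle_with_long_ear_clique:
  assumes P: "simple_cycle V E P"
    and R: "distinct R" "set R \<inter> set P = {}" "set R \<subseteq> V" "2 \<le> length R"
    and ear: "walk E (P ! 1 # R @ [hd P])" and shortcut: "{hd R, hd P} \<in> E"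
    and short: "length P + length R \<le> L"
  shows "clique E (set P)"
proof -
  have P': "distinct P" "2 < length P" "P \<noteq> []" using P by (auto simp: simple_cycle_def)
  have "R \<noteq> []" using R(4) by auto
  then have R': "R \<noteq> []" "walk E R" "{P ! 1, hd R} \<in> E"
    using ear by (auto simp: walk_Cons_append_singleton)
  have hd_P1: "hd (rotate1 P) = P ! 1" using P'(2) by (cases P) (auto simp: hd_conv_nth nth_append)
  have last_P1: "rotate1 P ! (length P - 1) = hd P"
    using P'(3) by (simp add: nth_rotate1 hd_conv_nth)
  have "simple_cycle V E (take (Suc (length P - 1)) (rotate1 P) @ rev R)"
  proof (rule simple_cycle_prefix_ear)
    show "simple_cycle V E (rotate1 P)" using P simple_cycle_rotate[of V E 1 P] by simp
    show "walk E (rotate1 P ! (length P - 1) # rev R @ [hd (rotate1 P)])"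
      using ear walk_rev[of E "P ! 1 # R @ [hd P]"] unfolding hd_P1 last_P1
      by (simp del: walk_rev successively_rev)
  qed (use P'(2) R in auto)
  then have Y: "simple_cycle V E (rotate1 P @ rev R)" using P'(3) by simp
  have R01: "hd R = R ! 0" "R ! 0 \<in> set R" "R ! 1 \<in> set R" "R ! 0 \<noteq> R ! 1"
  proof -
    have "0 < length R" "1 < length R" using R(4) by auto
    then show "hd R = R ! 0" "R ! 0 \<in> set R" "R ! 1 \<in> set R" "R ! 0 \<noteq> R ! 1"
      using R(1) R'(1) by (auto simp: hd_conv_nth nth_eq_iff_index_eq)
  qed
  have "clique E (set (rotate1 P @ rev R))"
  proof (rule short_cycle_clique_if_three_neighbours[OF Y])
    show "length (rotate1 P @ rev R) \<le> L" using short by simp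
    have "P ! 1 \<in> set P" "hd P \<in> set P" "hd R \<notin> set P" "R ! 1 \<notin> set P"
      using P'(2,3) R01 R(2) by auto
    then have "hd R \<noteq> P ! 1" "hd R \<noteq> hd P" "R ! 1 \<noteq> P ! 1" "R ! 1 \<noteq> hd P" by metis+
    moreover have "P ! 1 \<noteq> hd P" using P'(1-3) by (simp add: hd_conv_nth nth_eq_iff_index_eq)
    ultimately show "distinct [hd R, P ! 1, R ! 1, hd P]" using R01 by auto
    show "{hd R, P ! 1, R ! 1, hd P} \<subseteq> set (rotate1 P @ rev R)"
      using R01 P'(2,3) by auto
    show "{{hd R, P ! 1}, {hd R, R ! 1}, {hd R, hd P}} \<subseteq> E"
      using R' shortcut successively_nth[OF R'(2), of 0] R(4) R01 by (auto simp: insert_commute)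
  qed
  then show ?thesis using clique_subset by auto
qed

lemma short_cycle_with_even_ear_clique:
  assumes P: "simple_cycle V E P" and k: "0 < k" "k < length P"
    and R: "distinct R" "set R \<inter> set P = {}" "set R \<subseteq> V"
    and ear: "walk E (P ! k # R @ [hd P])"
    and even: "even (Suc k + length R)" and nontrivial: "2 < Suc k + length R"
    and short: "length P + length R \<le> L"
  shows "clique E (set P)"
proof -
  let ?X = "take (Suc k) P @ R"
  have "simple_cycle V E ?X" by (rule simple_cycle_prefix_ear[OF P k R ear nontrivial])
  moreover have "length ?X = Suc k + length R" using k by simp
  moreover have "length ?X \<le> L" using k short by simp
  ultimately have clique_X: "clique E (set ?X)"
    using short_even_cycle_clique even by metis
  have P': "distinct P" "P \<noteq> []" using P k by (auto simp: simple_cycle_def)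
  have "hd P \<in> set ?X" using hd_in_set[of "take (Suc k) P"] P'(2) by simp
  moreover have "P ! k \<in> set ?X" using k by (simp add: take_Suc_conv_app_nth)
  moreover have "hd P \<noteq> P ! k" using k P' by (simp add: hd_conv_nth nth_eq_iff_index_eq)
  ultimately have chord: "{hd P, P ! k} \<in> E" using cliqueD[OF clique_X] by blast
  consider "k = length P - 1" | "2 \<le> k" "Suc k < length P" | "k = 1" using k by linarith
  then show ?thesis
  proof cases
    case 1
    then show ?thesis using clique_X clique_subset k by auto
  next
    case 2
    then show ?thesis using short_cycle_with_chord_clique[OF P _ 2 chord] short by simp
  next
    case 3
    have "length R \<noteq> 0" using nontrivial 3 by auto
    then have "2 \<le> length R" using even 3 by presburger
    moreover have "{hd R, hd P} \<in> E"
    proof (rule cliqueD[OF clique_X])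
      have "hd R \<in> set R" "hd P \<in> set P" using \<open>length R \<noteq> 0\<close> P'(2) by auto
      then show "hd R \<in> set ?X" "hd R \<noteq> hd P" using R(2) by auto
    qed fact
    ultimately show ?thesis
      using short_cycle_with_long_ear_clique[OF P R] ear 3 short by simp
  qed
qed

lemma short_cycle_with_ear_clique:
  assumes P: "simple_cycle V E P" and ab: "a < b" "b < length P"
    and R: "distinct R" "set R \<inter> set P = {}" "set R \<subseteq> V"
    and ear: "walk E (P ! a # R @ [P ! b])"
    and nontrivial: "R \<noteq> [] \<or> a + 2 \<le> b" "R \<noteq> [] \<or> a \<noteq> 0 \<or> b \<noteq> length P - 1"
    and short: "length P + length R \<le> L"
  shows "clique E (set P)"
proof (cases "even (length P)")
  case True
  then show ?thesis using short_even_cycle_clique[OF P] short by simp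
next
  case False
  let ?n = "length P"
  have "P \<noteq> []" using ab by auto
  have "even (Suc (b - a) + length R) \<or> even (Suc (?n - b + a) + length R)"
    using False ab by presburger
  then show ?thesis
  proof
    \<comment> \<open>Rotating P puts the arc of the even cycle at the front.\<close>
    assume even: "even (Suc (b - a) + length R)"
    have "hd (rotate a P) = P ! a" "rotate a P ! (b - a) = P ! b"
      using ab \<open>P \<noteq> []\<close> by (auto simp: hd_rotate_conv_nth nth_rotate)
    then have "walk E (rotate a P ! (b - a) # rev R @ [hd (rotate a P)])"
      using ear walk_rev[of E "P ! a # R @ [P ! b]"] by (simp del: walk_rev successively_rev)
    moreover have "simple_cycle V E (rotate a P)" "0 < b - a" "b - a < length (rotate a P)"
      "distinct (rev R)" "set (rev R) \<inter> set (rotate a P) = {}" "set (rev R) \<subseteq> V"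
      "length (rotate a P) + length (rev R) \<le> L"
      using P ab R short by auto
    moreover have "2 < Suc (b - a) + length (rev R)" using nontrivial(1) ab by (cases R) auto
    ultimately show ?thesis using short_cycle_with_even_ear_clique even by (metis length_rev set_rotate)
  next
    assume even: "even (Suc (?n - b + a) + length R)"
    have "hd (rotate b P) = P ! b" "rotate b P ! (?n - b + a) = P ! a"
      using ab \<open>P \<noteq> []\<close> by (auto simp: hd_rotate_conv_nth nth_rotate)
    then have "walk E (rotate b P ! (?n - b + a) # R @ [hd (rotate b P)])"
      using ear by simp
    moreover have "simple_cycle V E (rotate b P)" "0 < ?n - b + a" "?n - b + a < length (rotate b P)"
      "set R \<inter> set (rotate b P) = {}" "length (rotate b P) + length R \<le> L"
      using P ab R(2) short by auto
    moreover have "2 < Suc (?n - b + a) + length R" using nontrivial(2) ab by (cases R) auto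
    ultimately show ?thesis using short_cycle_with_even_ear_clique R even by (metis set_rotate)
  qed
qed

lemma short_cycle_clique_if_parallel_cycle:
  assumes P: "simple_cycle V E P" and Q: "simple_cycle V E Q"
    and ends: "hd P = hd Q" "last P = last Q" and "P \<noteq> Q"
    and short: "length P + length Q \<le> L"
  shows "clique E (set P)"
proof -
  have "distinct P" "P \<noteq> []" "distinct Q" "walk E Q" "2 < length Q" "set Q \<subseteq> V"
    using P Q by (auto simp: simple_cycle_iff_walk)
  then obtain a b R where "a < b" "b < length P" "distinct R" "set R \<inter> set P = {}"
    "set R \<subseteq> set Q" "walk E (P ! a # R @ [P ! b])" "R \<noteq> [] \<or> a + 2 \<le> b"
    "R \<noteq> [] \<or> a \<noteq> 0 \<or> b \<noteq> length P - 1" "length R + 2 \<le> length Q"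
    using ear_of_paths ends \<open>P \<noteq> Q\<close> by metis
  then show ?thesis
    using short_cycle_with_ear_clique[OF P] \<open>set Q \<subseteq> V\<close> short by simp
qed

lemma clique_union_through_edge:
  assumes S: "clique E S" and T: "clique E T"
    and uv: "u \<in> S \<inter> T" "v \<in> S \<inter> T" "u \<noteq> v"
    and "S \<union> T \<subseteq> V" and "4 \<le> L"
  shows "clique E (S \<union> T)"
proof -
  have cross: "{x, y} \<in> E" if "x \<in> S - T" "y \<in> T - S" for x y
  proof -
    have "simple_cycle V E [x, u, y, v]"
      using that uv cliqueD[OF S] cliqueD[OF T] \<open>S \<union> T \<subseteq> V\<close>
      by (auto simp: simple_cycle_iff_walk insert_commute)
    moreover have "length [x, u, y, v] \<le> L" using \<open>4 \<le> L\<close> by simp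
    ultimately have "clique E (set [x, u, y, v])"
      by (intro short_even_cycle_clique) simp_all
    then show ?thesis using that by (auto intro: cliqueD)
  qed
  show ?thesis
    unfolding clique_def
  proof (intro ballI impI)
    fix x y assume "x \<in> S \<union> T" "y \<in> S \<union> T" "x \<noteq> y"
    then consider "x \<in> S" "y \<in> S" | "x \<in> T" "y \<in> T" | "x \<in> S - T" "y \<in> T - S"
      | "x \<in> T - S" "y \<in> S - T"
      by blast
    then show "{x, y} \<in> E"
      by cases (use cliqueD[OF S] cliqueD[OF T] cross cross[of y x] \<open>x \<noteq> y\<close> in
          \<open>auto simp: insert_commute\<close>)
  qed
qed

end

theorem lemma5p1:
  fixes V :: "'a set" and E :: "'a set set" and C1 C2 :: "'a list"
  assumes "finite V" and "graph V E"
    and "simple_cycle V E C1" and "simple_cycle V E C2"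
    and "cycle_edges C1 \<noteq> cycle_edges C2"
    and "cycle_edges C1 \<inter> cycle_edges C2 \<noteq> {}"
    and "\<forall>C. simple_cycle V E C \<and> length C \<le> length C1 + length C2 \<longrightarrow> \<not> removable V E C"
  shows "is_complete_graph (cycle_verts C1 \<union> cycle_verts C2)
           (induced_edges E (cycle_verts C1 \<union> cycle_verts C2))"
proof -
  interpret no_short_removable_cycle V E "length C1 + length C2"
    using assms(7) by unfold_locales blast
  obtain u v where uv: "{u, v} \<in> cycle_edges C1" "{u, v} \<in> cycle_edges C2"
    using assms(6) by (auto simp: cycle_edges_def)
  obtain P where P: "simple_cycle V E P" "set P = set C1" "length P = length C1"
    "cycle_edges P = cycle_edges C1" "hd P = u" "last P = v"
    using simple_cycle_through_edge[OF assms(3) uv(1)] by blast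
  obtain Q where Q: "simple_cycle V E Q" "set Q = set C2" "length Q = length C2"
    "cycle_edges Q = cycle_edges C2" "hd Q = u" "last Q = v"
    using simple_cycle_through_edge[OF assms(4) uv(2)] by blast
  have "P \<noteq> Q" using P(4) Q(4) assms(5) by auto
  have "clique E (set P)" "clique E (set Q)"
    using short_cycle_clique_if_parallel_cycle[OF P(1) Q(1)]
      short_cycle_clique_if_parallel_cycle[OF Q(1) P(1)] P Q \<open>P \<noteq> Q\<close> by simp_all
  moreover have "u \<in> set P \<inter> set Q" "v \<in> set P \<inter> set Q"
  proof -
    have "P \<noteq> []" "Q \<noteq> []" using P(1) Q(1) by (auto simp: simple_cycle_def)
    then show "u \<in> set P \<inter> set Q" "v \<in> set P \<inter> set Q"
      using P(5,6) Q(5,6) by (metis IntI hd_in_set last_in_set)+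
  qed
  moreover have "u \<noteq> v" using simple_cycle_hd_neq_last[OF P(1)] P(5,6) by simp
  moreover have "set P \<union> set Q \<subseteq> V" "4 \<le> length C1 + length C2"
    using P Q by (auto simp: simple_cycle_def)
  ultimately have "clique E (set P \<union> set Q)" by (rule clique_union_through_edge)
  then show ?thesis
    using complete_graph_if_clique[OF assms(2)] P(2) Q(2) by (simp add: cycle_verts_def)
qed

end
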